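(* For any positive integers $r$ and $n$ with $\omega(n)\geq 2$ and $n\in F_r$, $\displaystyle P_1(n)<Q_1(n)\left(1-J_r+\frac{J_r}{r}Q_1(n)\right)$.
   Context: For a positive integer $r$, $S_r$ is the multiplicative arithmetic function with $S_r(p^{\alpha})=0$ if $p\leq r$ and $S_r(p^{\alpha})=p^{\alpha-1}(p-r)$ if $p>r$, for all primes $p$ and positive integers $\alpha$. $B_r=\{n\in\mathbb{N}: S_r(n)>0\}$ (positive integers whose smallest prime factor exceeds $r$, together with $1$). $F_r$ is the set of $n\in B_r$ such that $S_r(n)<S_r(m)$ for all $m\in B_r$ with $m>n$. $\omega(n)$ is the number of distinct prime factors of $n$. $P_1(n)$ is the largest prime divisor of $n$, and $Q_1(n)$ is the smallest prime that is larger than $r$ and does not divide $n$. $r\#$ is the product of all primes $\leq r$ (with $1\#=1$). The Jacobsthal function $J(m)$ is the smallest positive integer $a$ such that every set of $a$ consecutive integers contains an element coprime to $m$; $J_r=J(r\#)$. *)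

theory Defs
  imports Complex_Main "HOL-Computational_Algebra.Primes"
begin

definition S :: "nat \<Rightarrow> nat \<Rightarrow> nat" where
  "S r n = (\<Prod>p\<in>prime_factors n.
              (if p \<le> r then 0 else p ^ (multiplicity p n - 1) * (p - r)))"

definition B :: "nat \<Rightarrow> nat set" where
  "B r = {n. n > 0 \<and> S r n > 0}"

definition F :: "nat \<Rightarrow> nat set" where
  "F r = {n \<in> B r. \<forall>m \<in> B r. m > n \<longrightarrow> S r n < S r m}"

definition omega :: "nat \<Rightarrow> nat" where
  "omega n = card (prime_factors n)"

definition P1 :: "nat \<Rightarrow> nat" where
  "P1 n = Max (prime_factors n)"

definition Q1 :: "nat \<Rightarrow> nat \<Rightarrow> nat" where
  "Q1 r n = (LEAST q. prime q \<and> q > r \<and> \<not> q dvd n)"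

definition primorial :: "nat \<Rightarrow> nat" where
  "primorial r = \<Prod>{p. prime p \<and> p \<le> r}"

definition jacobsthal :: "nat \<Rightarrow> nat" where
  "jacobsthal m = (LEAST a. a > 0 \<and> (\<forall>k::int. \<exists>i<a. coprime (k + int i) (int m)))"

definition Jr :: "nat \<Rightarrow> nat" where
  "Jr r = jacobsthal (primorial r)"

end

theory Submission imports Defs begin

text \<open>Let J = Jr r, let p be a prime factor of n \<in> F r, write n = y p, and let q > r be a
  prime not dividing n. Some k with p div q < k \<le> p div q + J has all its prime factors
  above r, so m = y q k lies in B r and exceeds n. Since S r n = n \<Prod>(1 - r/l) over the
  prime factors l of n, replacing the factor p by q k multiplies S by at most
  k (q - r) / (p - r); minimality of n in F r thus forces p - r < k (q - r), and this fails
  as soon as p \<ge> q (1 - J + J q / r). The hypothesis on omega only serves to make P1 n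
  a prime factor of n.\<close>

definition S_density :: "nat \<Rightarrow> nat set \<Rightarrow> real" where
  "S_density r A = (\<Prod>p\<in>A. 1 - real r / real p)"

lemma S_pos_iff: "S r n > 0 \<longleftrightarrow> (\<forall>p\<in>prime_factors n. r < p)"
proof
  assume pos: "S r n > 0"
  show "\<forall>p\<in>prime_factors n. r < p"
  proof (rule ccontr)
    assume "\<not> (\<forall>p\<in>prime_factors n. r < p)"
    then obtain p where "p \<in> prime_factors n" "p \<le> r" by auto
    hence "S r n = 0" unfolding S_def by (intro prod_zero) (auto intro!: bexI[of _ p])
    with pos show False by simp
  qed
next
  assume "\<forall>p\<in>prime_factors n. r < p"
  thus "S r n > 0"
    unfolding S_def by (intro prod_pos) (auto dest: in_prime_factors_imp_prime prime_gt_0_nat)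
qed

lemma B_iff: "n \<in> B r \<longleftrightarrow> n > 0 \<and> (\<forall>p\<in>prime_factors n. r < p)"
  unfolding B_def by (simp add: S_pos_iff)

lemma S_eq_density:
  assumes "n > 0" "\<forall>p\<in>prime_factors n. r < p"
  shows "real (S r n) = real n * S_density r (prime_factors n)"
proof -
  have factor: "real (if p \<le> r then 0 else p ^ (multiplicity p n - 1) * (p - r))
      = real p ^ multiplicity p n * (1 - real r / real p)"
    if p: "p \<in> prime_factors n" for p
  proof -
    have "multiplicity p n > 0" "real p > 0" "r < p"
      using p assms(2) prime_factors_multiplicity
      by (auto dest: in_prime_factors_imp_prime prime_gt_0_nat)
    then show ?thesis
      by (cases "multiplicity p n") (simp_all add: of_nat_diff field_simps)
  qed
  have "real (S r n) = (\<Prod>p\<in>prime_factors n. real p ^ multiplicity p n * (1 - real r / real p))"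
    unfolding S_def of_nat_prod by (rule prod.cong[OF refl factor])
  moreover have "real n = (\<Prod>p\<in>prime_factors n. real p ^ multiplicity p n)"
    using arg_cong[where f=real, OF prime_factorization_nat[OF assms(1)]]
    by (simp only: of_nat_prod of_nat_power)
  ultimately show ?thesis by (simp add: prod.distrib S_density_def)
qed

lemma S_density_nonneg: "\<forall>p\<in>A. r < p \<Longrightarrow> S_density r A \<ge> 0"
  unfolding S_density_def by (intro prod_nonneg) auto

lemma S_density_antimono:
  assumes "finite X" "Y \<subseteq> X" "\<forall>p\<in>X. r < p"
  shows "S_density r X \<le> S_density r Y"
proof -
  have "S_density r X = S_density r Y * S_density r (X - Y)"
    unfolding S_density_def using assms by (metis mult.commute prod.subset_diff)
  moreover have "S_density r (X - Y) \<le> 1"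
    unfolding S_density_def using assms by (intro prod_le_1) auto
  moreover have "S_density r Y \<ge> 0" using assms by (intro S_density_nonneg) auto
  ultimately show ?thesis by (simp add: mult_left_le)
qed

lemma S_density_insert_ge:
  assumes "finite A" "\<forall>l\<in>A. r < l" "r < p"
  shows "(1 - real r / real p) * S_density r A \<le> S_density r (insert p A)"
proof (cases "p \<in> A")
  case True
  have "(1 - real r / real p) * S_density r A \<le> 1 * S_density r A"
    using assms by (intro mult_right_mono S_density_nonneg) auto
  with True show ?thesis by (simp add: insert_absorb)
next
  case False
  with assms(1) show ?thesis unfolding S_density_def by simp
qed

lemma S_times_prime_lower:
  assumes "y > 0" "prime p" "\<forall>l\<in>prime_factors (y * p). r < l"
  shows "real y * (real p - real r) * S_density r (prime_factors y) \<le> real (S r (y * p))"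
proof -
  have pf: "prime_factors (y * p) = insert p (prime_factors y)"
    using assms(1,2) by (simp add: prime_factors_product prime_prime_factors prime_gt_0_nat)
  have p: "real p > 0" "r < p" using assms(2,3) pf by (auto simp: prime_gt_0_nat)
  have "real y * (real p - real r) * S_density r (prime_factors y)
      = real y * real p * ((1 - real r / real p) * S_density r (prime_factors y))"
    using p by (simp add: field_simps)
  also have "\<dots> \<le> real y * real p * S_density r (prime_factors (y * p))"
    unfolding pf using assms(3) pf p by (intro mult_left_mono S_density_insert_ge) auto
  also have "\<dots> = real (S r (y * p))"
    using S_eq_density[of "y * p" r] assms p by (simp add: prime_gt_0_nat)
  finally show ?thesis .
qed

lemma S_times_prime_upper:
  assumes "y > 0" "k > 0" "prime q" "\<not> q dvd y" "\<forall>l\<in>prime_factors (y * q * k). r < l"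
  shows "real (S r (y * q * k)) \<le> real y * real k * (real q - real r) * S_density r (prime_factors y)"
proof -
  let ?A = "prime_factors y"
  have q: "q > 0" using assms(3) prime_gt_0_nat by blast
  have pf: "prime_factors (y * q * k) = insert q ?A \<union> prime_factors k"
    using assms(1-3) q by (simp add: prime_factors_product prime_prime_factors)
  have "q \<notin> ?A" using assms(4) by auto
  have "real (S r (y * q * k)) = real y * real q * real k * S_density r (prime_factors (y * q * k))"
    using S_eq_density[of "y * q * k" r] assms(1,2,5) q by simp
  also have "\<dots> \<le> real y * real q * real k * S_density r (insert q ?A)"
    using assms(5) pf by (intro mult_left_mono S_density_antimono) auto
  also have "\<dots> = real y * real k * (real q - real r) * S_density r ?A"
    using \<open>q \<notin> ?A\<close> q by (simp add: S_density_def field_simps)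
  finally show ?thesis .
qed

lemma primorial_pos: "primorial r > 0"
  unfolding primorial_def by (intro prod_pos) (auto dest: prime_gt_0_nat)

lemma prime_factors_gt_if_coprime_primorial:
  assumes "coprime k (primorial r)" "l \<in> prime_factors k"
  shows "r < l"
proof (rule ccontr)
  assume "\<not> r < l"
  hence "l dvd primorial r"
    using assms(2) unfolding primorial_def
    by (intro dvd_prodI[where f="\<lambda>x. x", simplified]) (auto intro: finite_subset[of _ "{..r}"])
  with assms show False
    by (metis coprime_common_divisor_nat in_prime_factors_iff not_prime_1)
qed

lemma jacobsthal_covers:
  assumes "m > 0"
  shows "\<forall>k::int. \<exists>i<jacobsthal m. coprime (k + int i) (int m)"
proof -
  have "\<exists>i<m. coprime (k + int i) (int m)" for k :: int
  proof (intro exI conjI)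
    show "nat ((1 - k) mod int m) < m" using assms by (simp add: nat_less_iff)
    have "(k + int (nat ((1 - k) mod int m))) mod int m = 1 mod int m"
      using assms by (simp add: mod_add_right_eq)
    then show "coprime (k + int (nat ((1 - k) mod int m))) (int m)"
      by (metis coprime_1_left coprime_mod_left_iff assms of_nat_0_less_iff less_irrefl mod_by_1)
  qed
  with assms have "\<exists>a. a > 0 \<and> (\<forall>k::int. \<exists>i<a. coprime (k + int i) (int m))" by blast
  then show ?thesis unfolding jacobsthal_def by (rule LeastI_ex[THEN conjunct2])
qed

lemma rough_in_window:
  "\<exists>k. a \<le> k \<and> k < a + Jr r \<and> (\<forall>l\<in>prime_factors k. r < l)"
proof -
  obtain i where i: "i < Jr r" "coprime (int a + int i) (int (primorial r))"
    using jacobsthal_covers[OF primorial_pos] unfolding Jr_def by blast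
  then have "coprime (a + i) (primorial r)" by (metis coprime_int_iff of_nat_add)
  with i(1) show ?thesis
    by (intro exI[of _ "a + i"]) (auto dest: prime_factors_gt_if_coprime_primorial)
qed

lemma rough_multiplier_bound:
  fixes p q r d J k :: real
  assumes "r > 0" "q > r" "J \<ge> 0" "d * q \<le> p" "k \<le> d + J"
    and "q * (1 - J + J / r * q) \<le> p"
  shows "k * (q - r) \<le> p - r"
proof -
  have "r * q + J * q * (q - r) = r * (q * (1 - J + J / r * q))"
    using assms(1) by (simp add: field_simps)
  also have "\<dots> \<le> r * p" using assms(1,6) by simp
  finally have quad: "r * q + J * q * (q - r) \<le> r * p" .
  have "q * (k * (q - r)) \<le> q * ((d + J) * (q - r))"
    using assms by (intro mult_left_mono mult_right_mono) auto
  also have "\<dots> = d * q * (q - r) + J * q * (q - r)" by (simp add: algebra_simps)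
  also have "\<dots> \<le> p * (q - r) + J * q * (q - r)"
    using assms(2,4) by (intro add_right_mono mult_right_mono) auto
  also have "\<dots> \<le> q * (p - r)" using quad by (simp add: algebra_simps)
  finally show ?thesis using assms(1,2) by (simp add: mult_le_cancel_left_pos)
qed

lemma F_replace_prime_factor:
  assumes "n \<in> F r" "p \<in> prime_factors n" "prime q" "r < q" "\<not> q dvd n"
    and "k > 0" "\<forall>l\<in>prime_factors k. r < l" "p < q * k"
  shows "real p - real r < real k * (real q - real r)"
proof (rule ccontr)
  assume not_gt: "\<not> ?thesis"
  have minimal: "\<And>m. m \<in> B r \<Longrightarrow> n < m \<Longrightarrow> S r n < S r m"
    and n: "n > 0" "\<forall>l\<in>prime_factors n. r < l"
    using assms(1) unfolding F_def by (auto simp: B_iff)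
  have p: "prime p" "p dvd n" using assms(2) by auto
  define y where "y = n div p"
  let ?D = "S_density r (prime_factors y)"
  have ny: "n = y * p" and "y > 0" using p n(1) by (auto simp: y_def)
  define m where "m = y * q * k"
  have "\<not> q dvd y" using assms(5) ny by auto
  have "n < m" using \<open>y > 0\<close> assms(8) by (simp add: ny m_def)
  have "prime_factors y \<subseteq> prime_factors n" using ny n(1) by (intro dvd_prime_factors) auto
  then have rough_y: "\<forall>l\<in>prime_factors y. r < l" using n(2) by auto
  moreover have "prime_factors m = insert q (prime_factors y) \<union> prime_factors k"
    using \<open>y > 0\<close> assms(3,6) unfolding m_def
    by (simp add: prime_factors_product prime_prime_factors prime_gt_0_nat)
  ultimately have rough_m: "\<forall>l\<in>prime_factors m. r < l" using assms(4,7) by auto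
  with \<open>n < m\<close> have "S r n < S r m" by (intro minimal) (auto simp: B_iff)
  have "real (S r m) \<le> real y * real k * (real q - real r) * ?D"
    using \<open>y > 0\<close> assms(6,3) \<open>\<not> q dvd y\<close> rough_m unfolding m_def
    by (rule S_times_prime_upper)
  also have "\<dots> \<le> real y * (real p - real r) * ?D"
    using not_gt rough_y
    by (intro mult_right_mono S_density_nonneg) (auto simp: mult.assoc intro: mult_left_mono)
  also have "\<dots> \<le> real (S r n)"
    using \<open>y > 0\<close> p(1) n(2) unfolding ny by (rule S_times_prime_lower)
  finally show False using \<open>S r n < S r m\<close> by simp
qed

lemma F_prime_factor_bound:
  assumes "r > 0" "n \<in> F r" "p \<in> prime_factors n" "prime q" "r < q" "\<not> q dvd n"
  shows "real p < real q * (1 - real (Jr r) + real (Jr r) / real r * real q)"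
proof (rule ccontr)
  assume too_large: "\<not> ?thesis"
  obtain k where k: "p div q + 1 \<le> k" "k < p div q + 1 + Jr r" "\<forall>l\<in>prime_factors k. r < l"
    using rough_in_window by blast
  have "p < q * (p div q) + q"
    using mult_div_mod_eq[of q p] mod_less_divisor[of q p] assms(5) by linarith
  also have "\<dots> = q * (p div q + 1)" by simp
  also have "\<dots> \<le> q * k" using k(1) by (rule mult_le_mono2)
  finally have "real p - real r < real k * (real q - real r)"
    using k(1,3) by (intro F_replace_prime_factor[OF assms(2-6)]) auto
  moreover have "real k * (real q - real r) \<le> real p - real r"
  proof (rule rough_multiplier_bound)
    show "real (p div q) * real q \<le> real p"
      by (metis div_times_less_eq_dividend of_nat_le_iff of_nat_mult)
    show "real k \<le> real (p div q) + real (Jr r)" using k(2) by linarith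
  qed (use assms(1,5) too_large in auto)
  ultimately show False by linarith
qed

lemma Q1_spec:
  assumes "n > 0"
  shows "prime (Q1 r n) \<and> r < Q1 r n \<and> \<not> Q1 r n dvd n"
proof -
  obtain q where q: "prime q" "r + n < q" using bigger_prime by blast
  with assms have "\<not> q dvd n" by (auto dest: dvd_imp_le)
  with q have "prime q \<and> r < q \<and> \<not> q dvd n" by simp
  then show ?thesis unfolding Q1_def by (rule LeastI)
qed

theorem lemma3p4:
  fixes r n :: nat
  assumes "r > 0" and "n > 0" and "omega n \<ge> 2" and "n \<in> F r"
  shows "real (P1 n) < real (Q1 r n) *
           (1 - real (Jr r) + real (Jr r) / real r * real (Q1 r n))"
proof -
  have "prime_factors n \<noteq> {}" using assms(3) unfolding omega_def by auto
  then have "P1 n \<in> prime_factors n" unfolding P1_def by (intro Max_in) auto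
  moreover have "prime (Q1 r n)" "r < Q1 r n" "\<not> Q1 r n dvd n"
    using Q1_spec[OF assms(2)] by auto
  ultimately show ?thesis by (rule F_prime_factor_bound[OF assms(1,4)])
qed

end
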